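(* Let $0\le\alpha<\pi/2$ and let $H\in\mathbb{M}_n(\mathbb{M}_k)$ satisfy $W(H)\subseteq S_\alpha$. Then \[ \left|\frac{\det(\mathrm{tr}_1 H)}{n^k}\right|^n \ge (\cos\alpha)^{nk}\,|\det H|. \]
   Context: $\mathbb{M}_n(\mathbb{M}_k)$ denotes the set of $nk\times nk$ complex matrices partitioned as $H=[H_{i,j}]_{i,j=1}^n$ with each block $H_{i,j}$ a $k\times k$ complex matrix. The first partial trace is $\mathrm{tr}_1 H=\sum_{i=1}^n H_{i,i}\in\mathbb{M}_k$. The numerical range of $A\in\mathbb{M}_p$ is $W(A)=\{x^*Ax: x\in\mathbb{C}^p, x^*x=1\}$. For $\alpha\in[0,\pi/2)$, $S_\alpha=\{z\in\mathbb{C}: \Re z>0,\ |\Im z|\le (\Re z)\tan\alpha\}$. *)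

theory Defs
  imports Complex_Main "Jordan_Normal_Form.Matrix" "Jordan_Normal_Form.Determinant"
begin

text \<open>Numerical range of a square complex matrix A of size p:
  W(A) = { x^* A x : x in C^p, x^* x = 1 }.  Here (mult_mat_vec A x) \<bullet>c x = x^* A x.\<close>
definition numerical_range :: "complex mat \<Rightarrow> complex set" where
  "numerical_range A = {(mult_mat_vec A x) \<bullet>c x | x. x \<in> carrier_vec (dim_col A) \<and> x \<bullet>c x = 1}"

definition sector :: "real \<Rightarrow> complex set" where
  "sector \<alpha> = {z. Re z > 0 \<and> \<bar>Im z\<bar> \<le> Re z * tan \<alpha>}"

text \<open>First partial trace of H in M_n(M_k), viewed as an (n*k) x (n*k) matrix whose
  (i,j) block (0-based) occupies rows i*k..i*k+k-1 and columns j*k..j*k+k-1: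
  tr_1 H = sum_{i<n} H_{i,i}.\<close>
definition partial_trace1 :: "nat \<Rightarrow> nat \<Rightarrow> complex mat \<Rightarrow> complex mat" where
  "partial_trace1 n k H = mat k k (\<lambda>(a, b). \<Sum>i<n. H $$ (i * k + a, i * k + b))"

end

theory Submission
  imports Defs "Jordan_Normal_Form.Schur_Decomposition"
begin

text \<open>Let \<open>R\<close> and \<open>S\<close> be the Hermitian parts of \<open>H\<close> and of \<open>tr\<^sub>1 H\<close>. Both are positive definite,
  because \<open>W(H)\<close> lies in the open right half-plane, and \<open>tr\<^sub>1 R = S\<close>. Three estimates chain together.
  (1) \<open>det H = det R \<cdot> \<Prod>\<lambda>\<^sub>i\<close> with \<open>\<lambda>\<^sub>i\<close> the eigenvalues of \<open>R\<^sup>-\<^sup>1 H\<close>, and every \<open>\<lambda>\<^sub>i\<close> equals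
  \<open>x\<^sup>*Hx / Re (x\<^sup>*Hx)\<close> for some \<open>x \<noteq> 0\<close>; the sector condition gives \<open>|\<lambda>\<^sub>i| \<le> 1 / cos \<alpha>\<close>, hence
  \<open>|det H| \<le> det R / cos\<^sup>n\<^sup>k \<alpha>\<close>.
  (2) The same factorisation for \<open>tr\<^sub>1 H\<close>, now using only \<open>|\<lambda>\<^sub>i| \<ge> 1\<close>, gives \<open>det S \<le> |det (tr\<^sub>1 H)|\<close>.
  (3) The eigenvalues of \<open>(I\<^sub>n \<otimes> S)\<^sup>-\<^sup>1 R\<close> are positive and sum to \<open>tr (S\<^sup>-\<^sup>1 tr\<^sub>1 R) = k\<close>, so by
  AM-GM \<open>det R \<le> (det S)\<^sup>n / n\<^sup>n\<^sup>k\<close>.\<close>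

lemma sum_nat_blocks:
  fixes g :: "nat \<Rightarrow> 'a::comm_monoid_add"
  shows "(\<Sum>r<n * k. g r) = (\<Sum>i<n. \<Sum>a<k. g (i * k + a))"
proof -
  have "(\<Sum>r\<in>{i * k..<i * k + k}. g r) = (\<Sum>a<k. g (i * k + a))" for i
    using sum.atLeastLessThan_shift_0[of g "i * k" "i * k + k"] by (simp add: atLeast0LessThan add.commute)
  then show ?thesis
    using sum.nat_group[of g k n] by simp
qed

lemma block_index_less:
  fixes i n a k :: nat
  assumes "i < n" "a < k"
  shows "i * k + a < n * k"
proof -
  have "(i + 1) * k \<le> n * k" using assms by (intro mult_right_mono) auto
  with \<open>a < k\<close> show ?thesis by simp
qed

lemma block_index_cases:
  fixes r n k :: nat
  assumes "r < n * k"
  obtains i a where "r = i * k + a" "i < n" "a < k"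
proof
  show "r = r div k * k + r mod k" by simp
  show "r div k < n" using assms by (simp add: less_mult_imp_div_less)
  show "r mod k < k" using assms by (cases k) auto
qed

lemma block_index_eq_iff:
  fixes i j a b k :: nat
  assumes "a < k" "b < k"
  shows "i * k + a = j * k + b \<longleftrightarrow> i = j \<and> a = b"
proof
  assume eq: "i * k + a = j * k + b"
  have "i = (i * k + a) div k" "j = (j * k + b) div k" "a = (i * k + a) mod k" "b = (j * k + b) mod k"
    using assms by simp_all
  with eq show "i = j \<and> a = b" by metis
qed simp

section \<open>Quadratic forms, sectors and positive definiteness\<close>

text \<open>Inequalities between complex numbers refer to the order of \<open>HOL-Library.Complex_Order\<close>
  (imported by \<open>Jordan_Normal_Form\<close>), in which \<open>0 < z\<close> means that \<open>z\<close> is a positive real.\<close>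
lemma complex_pos_iff: "0 < (z::complex) \<longleftrightarrow> Im z = 0 \<and> 0 < Re z"
  by (auto simp: less_complex_def)

lemma mult_pos_complex: "0 < (a::complex) \<Longrightarrow> 0 < b \<Longrightarrow> 0 < a * b"
  by (simp add: complex_pos_iff)

lemma prod_pos_complex: "(\<And>i. i \<in> A \<Longrightarrow> 0 < (f i :: complex)) \<Longrightarrow> 0 < prod f A"
  by (induction A rule: infinite_finite_induct) (auto simp: complex_pos_iff intro: mult_pos_complex)

lemma complex_pos_of_real: "0 < (z::complex) \<Longrightarrow> z = of_real (Re z)"
  by (simp add: complex_pos_iff complex_eq_iff)

definition qform :: "complex mat \<Rightarrow> complex vec \<Rightarrow> complex" where
  "qform A v = (A *\<^sub>v v) \<bullet>c v"

lemma qform_expand: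
  assumes "A \<in> carrier_mat p p" "v \<in> carrier_vec p"
  shows "qform A v = (\<Sum>i<p. \<Sum>j<p. A $$ (i, j) * v $ j * cnj (v $ i))"
  using assms unfolding qform_def
  by (auto simp: scalar_prod_def atLeast0LessThan sum_distrib_right intro!: sum.cong)

lemma qform_smult:
  assumes "A \<in> carrier_mat p p" "v \<in> carrier_vec p"
  shows "qform A (c \<cdot>\<^sub>v v) = c * cnj c * qform A v"
  using assms by (simp add: qform_expand sum_distrib_left mult_ac)

lemma qform_zero: "A \<in> carrier_mat p p \<Longrightarrow> qform A (0\<^sub>v p) = 0"
  unfolding qform_def by simp

lemma qform_generalized_eigenvector:
  assumes "P \<in> carrier_mat p p" "Q \<in> carrier_mat p p" "v \<in> carrier_vec p"
    and "P *\<^sub>v v = e \<cdot>\<^sub>v (Q *\<^sub>v v)"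
  shows "qform P v = e * qform Q v"
  using assms unfolding qform_def by (simp add: smult_scalar_prod_distrib[of _ p])

lemma sector_scaleR:
  assumes "z \<in> sector \<alpha>" "0 < r"
  shows "of_real r * z \<in> sector \<alpha>"
proof -
  have "\<bar>r * Im z\<bar> = r * \<bar>Im z\<bar>" using assms(2) by (simp add: abs_mult)
  also have "\<dots> \<le> r * (Re z * tan \<alpha>)" using assms unfolding sector_def by (intro mult_left_mono) auto
  finally show ?thesis using assms unfolding sector_def by (auto simp: mult.assoc)
qed

lemma norm_le_Re_div_cos_sector:
  assumes "0 \<le> \<alpha>" "\<alpha> < pi / 2" "z \<in> sector \<alpha>"
  shows "cmod z \<le> Re z / cos \<alpha>"
proof -
  have cos: "0 < cos \<alpha>" using assms by (intro cos_gt_zero_pi) auto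
  have re: "0 < Re z" and im: "\<bar>Im z\<bar> \<le> Re z * tan \<alpha>" using assms(3) unfolding sector_def by auto
  have "(Im z)\<^sup>2 \<le> (Re z * tan \<alpha>)\<^sup>2"
    using power_mono[OF im abs_ge_zero, of 2] by simp
  then have "(cmod z)\<^sup>2 \<le> (Re z)\<^sup>2 * (1 + (tan \<alpha>)\<^sup>2)"
    unfolding cmod_power2 by (simp add: algebra_simps)
  also have "\<dots> = (Re z)\<^sup>2 / (cos \<alpha>)\<^sup>2"
    using tan_sec[of \<alpha>] cos by (simp add: power_inverse divide_inverse)
  also have "\<dots> = (Re z / cos \<alpha>)\<^sup>2"
    by (simp add: power_divide)
  finally show ?thesis
    by (rule power2_le_imp_le) (use re cos in simp)
qed

text \<open>Rescaling a vector to unit length multiplies its quadratic form by a positive real.\<close>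
lemma qform_in_sector:
  assumes H: "H \<in> carrier_mat p p" and W: "numerical_range H \<subseteq> sector \<alpha>"
    and v: "v \<in> carrier_vec p" "v \<noteq> 0\<^sub>v p"
  shows "qform H v \<in> sector \<alpha>"
proof -
  have vv: "qform (1\<^sub>m p) v = v \<bullet>c v" using v unfolding qform_def by simp
  define r where "r = Re (v \<bullet>c v)"
  have "0 < v \<bullet>c v" using v by simp
  then have r: "0 < r" and vr: "v \<bullet>c v = of_real r"
    unfolding r_def complex_pos_iff by (auto simp: complex_eq_iff)
  define c where "c = complex_of_real (1 / sqrt r)"
  have cc: "c * cnj c = of_real (1 / r)"
    using r unfolding c_def by (simp flip: of_real_mult)
  define u where "u = c \<cdot>\<^sub>v v"
  have u: "u \<in> carrier_vec p" using v unfolding u_def by simp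
  have "u \<bullet>c u = qform (1\<^sub>m p) u"
    using u unfolding qform_def by simp
  also have "\<dots> = 1"
    using r unfolding u_def qform_smult[OF one_carrier_mat v(1)] vv cc vr by simp
  finally have "u \<bullet>c u = 1" .
  then have "qform H u \<in> sector \<alpha>"
    using W H u unfolding numerical_range_def qform_def by auto
  moreover have "qform H v = of_real r * qform H u"
    using r unfolding u_def qform_smult[OF H v(1)] cc by simp
  ultimately show ?thesis using sector_scaleR r by simp
qed

definition herm_part :: "complex mat \<Rightarrow> complex mat" where
  "herm_part A = mat (dim_row A) (dim_row A) (\<lambda>(i, j). (A $$ (i, j) + cnj (A $$ (j, i))) / 2)"

lemma herm_part_carrier [simp]: "A \<in> carrier_mat p p \<Longrightarrow> herm_part A \<in> carrier_mat p p"
  unfolding herm_part_def by auto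

lemma qform_herm_part:
  assumes A: "A \<in> carrier_mat p p" and v: "v \<in> carrier_vec p"
  shows "qform (herm_part A) v = of_real (Re (qform A v))"
proof -
  have "qform (herm_part A) v = (qform A v + (\<Sum>i<p. \<Sum>j<p. cnj (A $$ (j, i)) * v $ j * cnj (v $ i))) / 2"
    using A v unfolding qform_expand[OF herm_part_carrier[OF A] v] qform_expand[OF A v]
    by (simp add: herm_part_def sum.distrib sum_divide_distrib[symmetric] algebra_simps)
  also have "(\<Sum>i<p. \<Sum>j<p. cnj (A $$ (j, i)) * v $ j * cnj (v $ i)) = cnj (qform A v)"
    unfolding qform_expand[OF A v] by (subst sum.swap) (simp add: mult_ac)
  finally show ?thesis by (simp add: complex_add_cnj)
qed

definition pos_def :: "nat \<Rightarrow> complex mat \<Rightarrow> bool" where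
  "pos_def p Q \<longleftrightarrow> (\<forall>v \<in> carrier_vec p. v \<noteq> 0\<^sub>v p \<longrightarrow> 0 < qform Q v)"

lemma pos_def_one: "pos_def p (1\<^sub>m p)"
  unfolding pos_def_def qform_def by simp

lemma pos_def_qform_nonneg:
  assumes "Q \<in> carrier_mat p p" "pos_def p Q" "v \<in> carrier_vec p"
  shows "0 \<le> qform Q v"
  using assms qform_zero[of Q p] unfolding pos_def_def by (cases "v = 0\<^sub>v p") (auto intro: less_imp_le)

lemma pos_def_herm_part_sector:
  assumes "A \<in> carrier_mat p p" "\<And>v. v \<in> carrier_vec p \<Longrightarrow> v \<noteq> 0\<^sub>v p \<Longrightarrow> qform A v \<in> sector \<alpha>"
  shows "pos_def p (herm_part A)"
  using assms unfolding pos_def_def sector_def by (simp add: qform_herm_part complex_pos_iff)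

section \<open>Eigenvalues and generalized eigenvalues\<close>

definition trace :: "complex mat \<Rightarrow> complex" where
  "trace A = (\<Sum>i<dim_row A. A $$ (i, i))"

lemma trace_mult_comm:
  assumes "A \<in> carrier_mat p q" "B \<in> carrier_mat q p"
  shows "trace (A * B) = trace (B * A)"
proof -
  have "trace (A * B) = (\<Sum>i<p. \<Sum>j<q. A $$ (i, j) * B $$ (j, i))"
    using assms unfolding trace_def by (auto simp: scalar_prod_def atLeast0LessThan intro!: sum.cong)
  also have "\<dots> = (\<Sum>j<q. \<Sum>i<p. B $$ (j, i) * A $$ (i, j))"
    by (subst sum.swap) (simp add: mult.commute)
  also have "\<dots> = trace (B * A)"
    using assms unfolding trace_def by (auto simp: scalar_prod_def atLeast0LessThan intro!: sum.cong)
  finally show ?thesis .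
qed

lemma trace_one [simp]: "trace (1\<^sub>m p) = of_nat p"
  unfolding trace_def by simp

text \<open>The eigenvalues, with multiplicity, are the diagonal of a Schur triangularisation.\<close>
lemma det_trace_eigenvalues:
  assumes A: "A \<in> carrier_mat p p"
  obtains e where "det A = (\<Prod>i<p. e i)" "trace A = (\<Sum>i<p. e i)" "\<And>i. i < p \<Longrightarrow> eigenvalue A (e i)"
proof -
  obtain es where cp: "char_poly A = (\<Prod>a\<leftarrow>es. [:- a, 1:])"
    using char_poly_factorized[OF A] by blast
  obtain B P Q where "schur_decomposition A es = (B, P, Q)"
    by (cases "schur_decomposition A es") auto
  from schur_decomposition[OF A cp this] have sim: "similar_mat_wit A B P Q"
    and ut: "upper_triangular B" and dg: "diag_mat B = es" by auto
  from sim A have B: "B \<in> carrier_mat p p" and P: "P \<in> carrier_mat p p" and Q: "Q \<in> carrier_mat p p"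
    and QP: "Q * P = 1\<^sub>m p" and APBQ: "A = P * B * Q"
    unfolding similar_mat_wit_def Let_def by auto
  have "det A = det B"
    using det_similar sim unfolding similar_mat_def by blast
  also have "\<dots> = (\<Prod>i<p. B $$ (i, i))"
    using det_upper_triangular[OF ut B] B by (simp add: prod_list_diag_prod atLeast0LessThan)
  finally have det: "det A = (\<Prod>i<p. B $$ (i, i))" .
  have "trace A = trace (P * (B * Q))"
    using APBQ P B Q by simp
  also have "\<dots> = trace (B * Q * P)"
    using P B Q by (subst trace_mult_comm[of _ p p]) auto
  also have "\<dots> = trace B"
    using P B Q QP by simp
  finally have trace: "trace A = (\<Sum>i<p. B $$ (i, i))"
    using B unfolding trace_def by simp
  have "eigenvalue A (B $$ (i, i))" if "i < p" for i
  proof -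
    have "B $$ (i, i) \<in> set es"
      using that B unfolding dg[symmetric] diag_mat_def by auto
    then have "poly (char_poly A) (B $$ (i, i)) = 0"
      unfolding cp poly_prod_list by auto
    then show ?thesis
      using eigenvalue_root_char_poly[OF A] by blast
  qed
  with det trace show ?thesis using that by blast
qed

lemma det_trace_generalized_eigenvalues:
  assumes P: "P \<in> carrier_mat p p" and Q: "Q \<in> carrier_mat p p" and Qi: "Qi \<in> carrier_mat p p"
    and QQi: "Q * Qi = 1\<^sub>m p"
  obtains e where "det P = det Q * (\<Prod>i<p. e i)" "trace (Qi * P) = (\<Sum>i<p. e i)"
    "\<And>i. i < p \<Longrightarrow> \<exists>v. v \<in> carrier_vec p \<and> v \<noteq> 0\<^sub>v p \<and> P *\<^sub>v v = e i \<cdot>\<^sub>v (Q *\<^sub>v v)"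
proof -
  have M: "Qi * P \<in> carrier_mat p p" using Qi P by simp
  obtain e where det: "det (Qi * P) = (\<Prod>i<p. e i)" and trace: "trace (Qi * P) = (\<Sum>i<p. e i)"
    and ev: "\<And>i. i < p \<Longrightarrow> eigenvalue (Qi * P) (e i)"
    using det_trace_eigenvalues[OF M] by blast
  have QM: "Q * (Qi * P) = P"
    using Q Qi P QQi by (simp flip: assoc_mult_mat)
  then have "det P = det Q * (\<Prod>i<p. e i)"
    using det det_mult[OF Q M] by simp
  moreover have "\<exists>v. v \<in> carrier_vec p \<and> v \<noteq> 0\<^sub>v p \<and> P *\<^sub>v v = e i \<cdot>\<^sub>v (Q *\<^sub>v v)" if i: "i < p" for i
  proof -
    obtain v where v: "v \<in> carrier_vec p" "v \<noteq> 0\<^sub>v p" "(Qi * P) *\<^sub>v v = e i \<cdot>\<^sub>v v"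
      using ev[OF i] M unfolding eigenvalue_def eigenvector_def by auto
    have "P *\<^sub>v v = Q *\<^sub>v ((Qi * P) *\<^sub>v v)"
      using QM assoc_mult_mat_vec[OF Q M v(1)] by simp
    also have "\<dots> = e i \<cdot>\<^sub>v (Q *\<^sub>v v)"
      using v Q by (simp add: mult_mat_vec)
    finally show ?thesis using v by blast
  qed
  ultimately show ?thesis using that trace by blast
qed

lemma generalized_eigenvalue_pos:
  assumes P: "P \<in> carrier_mat p p" and Q: "Q \<in> carrier_mat p p"
    and "pos_def p P" "pos_def p Q"
    and v: "v \<in> carrier_vec p" "v \<noteq> 0\<^sub>v p" "P *\<^sub>v v = e \<cdot>\<^sub>v (Q *\<^sub>v v)"
  shows "0 < e"
proof -
  have "0 < qform P v" "0 < qform Q v"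
    using assms unfolding pos_def_def by auto
  moreover have "e = qform P v / qform Q v"
    using qform_generalized_eigenvector[OF P Q v(1,3)] \<open>0 < qform Q v\<close> by auto
  ultimately show ?thesis
    by (simp add: complex_pos_iff Re_divide Im_divide)
qed

lemma pos_def_det:
  assumes Q: "Q \<in> carrier_mat p p" and pd: "pos_def p Q"
  shows "0 < det Q"
proof -
  obtain e where det: "det Q = (\<Prod>i<p. e i)" and ev: "\<And>i. i < p \<Longrightarrow> eigenvalue Q (e i)"
    using det_trace_eigenvalues[OF Q] by blast
  have "0 < e i" if i: "i < p" for i
  proof -
    obtain v where "v \<in> carrier_vec p" "v \<noteq> 0\<^sub>v p" "Q *\<^sub>v v = e i \<cdot>\<^sub>v (1\<^sub>m p *\<^sub>v v)"
      using ev[OF i] Q unfolding eigenvalue_def eigenvector_def by auto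
    then show ?thesis
      using generalized_eigenvalue_pos[OF Q one_carrier_mat pd pos_def_one] by blast
  qed
  then show ?thesis
    unfolding det by (intro prod_pos_complex) auto
qed

lemma pos_def_invertible:
  assumes Q: "Q \<in> carrier_mat p p" and "pos_def p Q"
  obtains Qi where "Qi \<in> carrier_mat p p" "Q * Qi = 1\<^sub>m p"
proof -
  have "det Q \<noteq> 0"
    using pos_def_det[OF assms] by auto
  from det_non_zero_imp_unit[OF Q this, of "()"] show ?thesis
    using that unfolding Units_def ring_mat_def by auto
qed

section \<open>Determinant and Hermitian part\<close>

text \<open>The factors are the moduli of the generalized eigenvalues of \<open>A\<close> relative to its Hermitian part.\<close>
lemma det_herm_part_factor:
  assumes A: "A \<in> carrier_mat p p" and pd: "pos_def p (herm_part A)"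
  obtains f where "cmod (det A) = Re (det (herm_part A)) * (\<Prod>i<p. f i)"
    "\<And>i. i < p \<Longrightarrow> \<exists>v \<in> carrier_vec p. v \<noteq> 0\<^sub>v p \<and> 0 < Re (qform A v) \<and>
       f i = cmod (qform A v) / Re (qform A v)"
proof -
  let ?Q = "herm_part A"
  have Q: "?Q \<in> carrier_mat p p" using A by simp
  obtain Qi where Qi: "Qi \<in> carrier_mat p p" "?Q * Qi = 1\<^sub>m p"
    using pos_def_invertible[OF Q pd] by blast
  obtain e where det: "det A = det ?Q * (\<Prod>i<p. e i)"
    and ev: "\<And>i. i < p \<Longrightarrow> \<exists>v. v \<in> carrier_vec p \<and> v \<noteq> 0\<^sub>v p \<and> A *\<^sub>v v = e i \<cdot>\<^sub>v (?Q *\<^sub>v v)"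
    using det_trace_generalized_eigenvalues[OF A Q Qi] by blast
  have "0 < det ?Q" by (rule pos_def_det[OF Q pd])
  then have "cmod (det A) = Re (det ?Q) * (\<Prod>i<p. cmod (e i))"
    unfolding det norm_mult prod_norm by (simp add: complex_pos_iff cmod_eq_Re)
  moreover have "\<exists>v \<in> carrier_vec p. v \<noteq> 0\<^sub>v p \<and> 0 < Re (qform A v) \<and>
       cmod (e i) = cmod (qform A v) / Re (qform A v)" if i: "i < p" for i
  proof -
    obtain v where v: "v \<in> carrier_vec p" "v \<noteq> 0\<^sub>v p" "A *\<^sub>v v = e i \<cdot>\<^sub>v (?Q *\<^sub>v v)"
      using ev[OF i] by blast
    have "0 < qform ?Q v"
      using pd v unfolding pos_def_def by blast
    then have pos: "0 < Re (qform A v)"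
      by (simp add: qform_herm_part[OF A v(1)] complex_pos_iff)
    have "qform A v = e i * of_real (Re (qform A v))"
      using qform_generalized_eigenvector[OF A Q v(1,3)] qform_herm_part[OF A v(1)] by simp
    then have "cmod (qform A v) = cmod (e i) * Re (qform A v)"
      using pos by (metis norm_mult norm_of_real abs_of_pos)
    then show ?thesis
      using v pos by auto
  qed
  ultimately show ?thesis using that by blast
qed

lemma Re_det_herm_part_le:
  assumes A: "A \<in> carrier_mat p p" and pd: "pos_def p (herm_part A)"
  shows "Re (det (herm_part A)) \<le> cmod (det A)"
proof -
  obtain f where det: "cmod (det A) = Re (det (herm_part A)) * (\<Prod>i<p. f i)"
    and f: "\<And>i. i < p \<Longrightarrow> \<exists>v \<in> carrier_vec p. v \<noteq> 0\<^sub>v p \<and> 0 < Re (qform A v) \<and>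
       f i = cmod (qform A v) / Re (qform A v)"
    using det_herm_part_factor[OF A pd] by blast
  have "1 \<le> f i" if "i < p" for i
    using f[OF that] complex_Re_le_cmod by auto
  then have "1 \<le> (\<Prod>i<p. f i)"
    by (intro prod_ge_1) auto
  moreover have "0 < Re (det (herm_part A))"
    using pos_def_det[OF herm_part_carrier[OF A] pd] by (simp add: complex_pos_iff)
  ultimately show ?thesis
    unfolding det by simp
qed

lemma norm_det_le_sector:
  assumes A: "A \<in> carrier_mat p p" and \<alpha>: "0 \<le> \<alpha>" "\<alpha> < pi / 2"
    and sec: "\<And>v. v \<in> carrier_vec p \<Longrightarrow> v \<noteq> 0\<^sub>v p \<Longrightarrow> qform A v \<in> sector \<alpha>"
  shows "cmod (det A) \<le> Re (det (herm_part A)) / cos \<alpha> ^ p"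
proof -
  have pd: "pos_def p (herm_part A)"
    by (rule pos_def_herm_part_sector[OF A sec])
  obtain f where det: "cmod (det A) = Re (det (herm_part A)) * (\<Prod>i<p. f i)"
    and f: "\<And>i. i < p \<Longrightarrow> \<exists>v \<in> carrier_vec p. v \<noteq> 0\<^sub>v p \<and> 0 < Re (qform A v) \<and>
       f i = cmod (qform A v) / Re (qform A v)"
    using det_herm_part_factor[OF A pd] by blast
  have "0 \<le> f i \<and> f i \<le> 1 / cos \<alpha>" if i: "i < p" for i
  proof -
    obtain v where v: "v \<in> carrier_vec p" "v \<noteq> 0\<^sub>v p" and pos: "0 < Re (qform A v)"
      and fi: "f i = cmod (qform A v) / Re (qform A v)"
      using f[OF i] by blast
    then show ?thesis
      using norm_le_Re_div_cos_sector[OF \<alpha> sec[OF v]] by (simp add: fi pos_divide_le_eq)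
  qed
  then have "(\<Prod>i<p. f i) \<le> (1 / cos \<alpha>) ^ p"
    using prod_mono[of "{..<p}" f "\<lambda>_. 1 / cos \<alpha>"] by simp
  moreover have "0 < Re (det (herm_part A))"
    using pos_def_det[OF herm_part_carrier[OF A] pd] by (simp add: complex_pos_iff)
  ultimately show ?thesis
    unfolding det by (simp add: power_inverse divide_inverse)
qed

section \<open>Block-diagonal matrices and the first partial trace\<close>

text \<open>The Kronecker product \<open>I\<^sub>n \<otimes> X\<close>: \<open>n\<close> copies of \<open>X\<close> along the diagonal.\<close>
definition block_diag :: "nat \<Rightarrow> nat \<Rightarrow> complex mat \<Rightarrow> complex mat" where
  "block_diag n k X =
     mat (n * k) (n * k) (\<lambda>(r, s). if r div k = s div k then X $$ (r mod k, s mod k) else 0)"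

lemma block_diag_carrier [simp]: "block_diag n k X \<in> carrier_mat (n * k) (n * k)"
  and dim_block_diag [simp]: "dim_row (block_diag n k X) = n * k" "dim_col (block_diag n k X) = n * k"
  unfolding block_diag_def by simp_all

lemma block_diag_index:
  "i < n \<Longrightarrow> j < n \<Longrightarrow> a < k \<Longrightarrow> b < k \<Longrightarrow>
    block_diag n k X $$ (i * k + a, j * k + b) = (if i = j then X $$ (a, b) else 0)"
  unfolding block_diag_def by (simp add: block_index_less)

lemma block_diag_mult:
  assumes X: "X \<in> carrier_mat k k" and Y: "Y \<in> carrier_mat k k"
  shows "block_diag n k X * block_diag n k Y = block_diag n k (X * Y)"
proof (rule eq_matI)
  fix r s assume "r < dim_row (block_diag n k (X * Y))" "s < dim_col (block_diag n k (X * Y))"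
  then obtain i a j b where r: "r = i * k + a" "i < n" "a < k" and s: "s = j * k + b" "j < n" "b < k"
    by (auto elim!: block_index_cases)
  have "(block_diag n k X * block_diag n k Y) $$ (r, s) =
      (\<Sum>j'<n. \<Sum>c<k. block_diag n k X $$ (r, j' * k + c) * block_diag n k Y $$ (j' * k + c, s))"
    using r s block_index_less by (simp add: scalar_prod_def atLeast0LessThan sum_nat_blocks)
  also have "\<dots> = (\<Sum>j'<n. if j' = j then (if i = j then \<Sum>c<k. X $$ (a, c) * Y $$ (c, b) else 0) else 0)"
    using r s by (intro sum.cong) (auto simp: block_diag_index)
  also have "\<dots> = block_diag n k (X * Y) $$ (r, s)"
    using r s X Y by (simp add: block_diag_index scalar_prod_def atLeast0LessThan)
  finally show "(block_diag n k X * block_diag n k Y) $$ (r, s) = block_diag n k (X * Y) $$ (r, s)" .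
qed auto

lemma block_diag_one: "block_diag n k (1\<^sub>m k) = 1\<^sub>m (n * k)"
proof (rule eq_matI)
  fix r s assume "r < dim_row (1\<^sub>m (n * k) :: complex mat)" "s < dim_col (1\<^sub>m (n * k) :: complex mat)"
  then obtain i a j b where r: "r = i * k + a" "i < n" "a < k" and s: "s = j * k + b" "j < n" "b < k"
    by (auto elim!: block_index_cases)
  moreover have "i * k + a = j * k + b \<longleftrightarrow> i = j \<and> a = b"
    using block_index_eq_iff r(3) s(3) .
  ultimately show "block_diag n k (1\<^sub>m k) $$ (r, s) = 1\<^sub>m (n * k) $$ (r, s)"
    by (auto simp: block_diag_index block_index_less)
qed auto

lemma block_diag_Suc:
  assumes X: "X \<in> carrier_mat k k"
  shows "block_diag (Suc n) k X = four_block_mat X (0\<^sub>m k (n * k)) (0\<^sub>m (n * k) k) (block_diag n k X)"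
proof (rule eq_matI)
  fix r s assume "r < dim_row (four_block_mat X (0\<^sub>m k (n * k)) (0\<^sub>m (n * k) k) (block_diag n k X))"
    "s < dim_col (four_block_mat X (0\<^sub>m k (n * k)) (0\<^sub>m (n * k) k) (block_diag n k X))"
  then have r: "r < k + n * k" and s: "s < k + n * k" using X by auto
  then have "0 < k" by (cases k) auto
  have shift: "t div k = Suc ((t - k) div k)" "t mod k = (t - k) mod k" if "k \<le> t" for t
    using that \<open>0 < k\<close> le_div_geq le_mod_geq by auto
  show "block_diag (Suc n) k X $$ (r, s) =
      four_block_mat X (0\<^sub>m k (n * k)) (0\<^sub>m (n * k) k) (block_diag n k X) $$ (r, s)"
    using r s X unfolding block_diag_def
    by (cases "r < k"; cases "s < k") (auto simp: shift)
qed (use X in auto)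

lemma det_block_diag:
  assumes X: "X \<in> carrier_mat k k"
  shows "det (block_diag n k X) = det X ^ n"
proof (induction n)
  case 0
  have "block_diag 0 k X = 1\<^sub>m 0" by (rule eq_matI) (auto simp: block_diag_def)
  then show ?case by simp
next
  case (Suc n)
  have "det (block_diag (Suc n) k X) = det X * det (block_diag n k X)"
    unfolding block_diag_Suc[OF X]
    by (rule det_four_block_mat_lower_left_zero[OF X _ refl block_diag_carrier]) auto
  then show ?case using Suc by simp
qed

definition vec_block :: "nat \<Rightarrow> nat \<Rightarrow> complex vec \<Rightarrow> complex vec" where
  "vec_block k i v = vec k (\<lambda>a. v $ (i * k + a))"

definition block_embed :: "nat \<Rightarrow> nat \<Rightarrow> nat \<Rightarrow> complex vec \<Rightarrow> complex vec" where
  "block_embed n k i x = vec (n * k) (\<lambda>r. if r div k = i then x $ (r mod k) else 0)"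

lemma vec_block_carrier [simp]: "vec_block k i v \<in> carrier_vec k"
  unfolding vec_block_def by simp

lemma block_embed_carrier [simp]: "block_embed n k i x \<in> carrier_vec (n * k)"
  unfolding block_embed_def by simp

lemma vec_block_nonzero:
  assumes "v \<in> carrier_vec (n * k)" "v \<noteq> 0\<^sub>v (n * k)"
  obtains i where "i < n" "vec_block k i v \<noteq> 0\<^sub>v k"
proof -
  obtain r where r: "r < n * k" "v $ r \<noteq> 0"
    using assms by (metis eq_vecI carrier_vecD index_zero_vec(1,2))
  then obtain i a where "r = i * k + a" "i < n" "a < k"
    by (elim block_index_cases)
  with r have "vec_block k i v $ a \<noteq> 0" "i < n" "a < k"
    unfolding vec_block_def by simp_all
  then show ?thesis using that by force
qed

lemma block_embed_nonzero:
  assumes "x \<in> carrier_vec k" "x \<noteq> 0\<^sub>v k" "i < n"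
  shows "block_embed n k i x \<noteq> 0\<^sub>v (n * k)"
proof -
  obtain a where a: "a < k" "x $ a \<noteq> 0"
    using assms by (metis eq_vecI carrier_vecD index_zero_vec(1,2))
  then have "block_embed n k i x $ (i * k + a) \<noteq> 0"
    using block_index_less[OF \<open>i < n\<close> a(1)] unfolding block_embed_def by simp
  then show ?thesis
    using block_index_less[OF \<open>i < n\<close> a(1)] by auto
qed

lemma qform_block_diag:
  assumes X: "X \<in> carrier_mat k k" and v: "v \<in> carrier_vec (n * k)"
  shows "qform (block_diag n k X) v = (\<Sum>i<n. qform X (vec_block k i v))"
proof -
  have "qform (block_diag n k X) v =
      (\<Sum>i<n. \<Sum>a<k. \<Sum>j<n. \<Sum>b<k. block_diag n k X $$ (i * k + a, j * k + b) * v $ (j * k + b) * cnj (v $ (i * k + a)))"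
    by (simp add: qform_expand[OF block_diag_carrier v] sum_nat_blocks)
  also have "\<dots> = (\<Sum>i<n. \<Sum>a<k. \<Sum>j<n.
      if j = i then \<Sum>b<k. X $$ (a, b) * v $ (i * k + b) * cnj (v $ (i * k + a)) else 0)"
    by (intro sum.cong refl) (auto simp: block_diag_index)
  also have "\<dots> = (\<Sum>i<n. \<Sum>a<k. \<Sum>b<k. X $$ (a, b) * v $ (i * k + b) * cnj (v $ (i * k + a)))"
    by simp
  also have "\<dots> = (\<Sum>i<n. qform X (vec_block k i v))"
    by (intro sum.cong refl, subst qform_expand[OF X vec_block_carrier]) (simp add: vec_block_def)
  finally show ?thesis .
qed

lemma pos_def_block_diag:
  assumes X: "X \<in> carrier_mat k k" and pd: "pos_def k X"
  shows "pos_def (n * k) (block_diag n k X)"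
  unfolding pos_def_def
proof (intro ballI impI)
  fix v :: "complex vec" assume v: "v \<in> carrier_vec (n * k)" "v \<noteq> 0\<^sub>v (n * k)"
  then obtain i where "i < n" "vec_block k i v \<noteq> 0\<^sub>v k"
    by (elim vec_block_nonzero)
  then have "0 < (\<Sum>i<n. qform X (vec_block k i v))"
    using pd pos_def_qform_nonneg[OF X pd] unfolding pos_def_def
    by (intro sum_pos2[of _ i]) auto
  then show "0 < qform (block_diag n k X) v"
    by (simp add: qform_block_diag[OF X v(1)])
qed

lemma partial_trace1_carrier [simp]: "partial_trace1 n k H \<in> carrier_mat k k"
  and dim_partial_trace1 [simp]: "dim_row (partial_trace1 n k H) = k" "dim_col (partial_trace1 n k H) = k"
  unfolding partial_trace1_def by simp_all

lemma partial_trace1_index: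
  "a < k \<Longrightarrow> b < k \<Longrightarrow> partial_trace1 n k H $$ (a, b) = (\<Sum>i<n. H $$ (i * k + a, i * k + b))"
  unfolding partial_trace1_def by simp

lemma qform_partial_trace1:
  assumes A: "A \<in> carrier_mat (n * k) (n * k)" and x: "x \<in> carrier_vec k"
  shows "qform (partial_trace1 n k A) x = (\<Sum>i<n. qform A (block_embed n k i x))"
proof -
  have "qform A (block_embed n k i x) = (\<Sum>a<k. \<Sum>b<k. A $$ (i * k + a, i * k + b) * x $ b * cnj (x $ a))"
    if i: "i < n" for i
  proof -
    have "qform A (block_embed n k i x) =
        (\<Sum>i'<n. \<Sum>a<k. \<Sum>j<n. \<Sum>b<k. A $$ (i' * k + a, j * k + b) *
           block_embed n k i x $ (j * k + b) * cnj (block_embed n k i x $ (i' * k + a)))"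
      by (simp add: qform_expand[OF A block_embed_carrier] sum_nat_blocks)
    also have "\<dots> = (\<Sum>i'<n. \<Sum>a<k. \<Sum>j<n. if j = i then (if i' = i then
        \<Sum>b<k. A $$ (i * k + a, i * k + b) * x $ b * cnj (x $ a) else 0) else 0)"
      by (intro sum.cong refl) (auto simp: block_embed_def block_index_less)
    also have "\<dots> = (\<Sum>a<k. \<Sum>b<k. A $$ (i * k + a, i * k + b) * x $ b * cnj (x $ a))"
      using i by (subst sum.swap) simp
    finally show ?thesis .
  qed
  then have "(\<Sum>i<n. qform A (block_embed n k i x)) =
      (\<Sum>i<n. \<Sum>a<k. \<Sum>b<k. A $$ (i * k + a, i * k + b) * x $ b * cnj (x $ a))"
    by simp
  also have "\<dots> = (\<Sum>a<k. \<Sum>b<k. \<Sum>i<n. A $$ (i * k + a, i * k + b) * x $ b * cnj (x $ a))"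
    by (subst sum.swap) (rule sum.cong[OF refl], rule sum.swap)
  also have "\<dots> = qform (partial_trace1 n k A) x"
    by (simp add: qform_expand[OF partial_trace1_carrier x] partial_trace1_index sum_distrib_right)
  finally show ?thesis ..
qed

lemma pos_def_partial_trace1:
  assumes "1 \<le> n" and A: "A \<in> carrier_mat (n * k) (n * k)" and pd: "pos_def (n * k) A"
  shows "pos_def k (partial_trace1 n k A)"
  unfolding pos_def_def
proof (intro ballI impI)
  fix x :: "complex vec" assume x: "x \<in> carrier_vec k" "x \<noteq> 0\<^sub>v k"
  have "0 < (\<Sum>i<n. qform A (block_embed n k i x))"
    using assms x block_embed_nonzero[OF x] unfolding pos_def_def
    by (intro sum_pos) (auto simp: lessThan_empty_iff)
  then show "0 < qform (partial_trace1 n k A) x"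
    by (simp add: qform_partial_trace1[OF A x(1)])
qed

lemma trace_block_diag_mult:
  assumes Y: "Y \<in> carrier_mat k k" and A: "A \<in> carrier_mat (n * k) (n * k)"
  shows "trace (block_diag n k Y * A) = trace (Y * partial_trace1 n k A)"
proof -
  have "trace (block_diag n k Y * A) =
      (\<Sum>i<n. \<Sum>a<k. \<Sum>j<n. \<Sum>b<k. block_diag n k Y $$ (i * k + a, j * k + b) * A $$ (j * k + b, i * k + a))"
    using A block_index_less by (simp add: trace_def scalar_prod_def atLeast0LessThan sum_nat_blocks)
  also have "\<dots> = (\<Sum>i<n. \<Sum>a<k. \<Sum>j<n. if j = i then \<Sum>b<k. Y $$ (a, b) * A $$ (i * k + b, i * k + a) else 0)"
    by (intro sum.cong refl) (auto simp: block_diag_index)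
  also have "\<dots> = (\<Sum>a<k. \<Sum>i<n. \<Sum>b<k. Y $$ (a, b) * A $$ (i * k + b, i * k + a))"
    by (simp add: sum.swap[of _ "{..<n}" "{..<k}"])
  also have "\<dots> = (\<Sum>a<k. \<Sum>b<k. \<Sum>i<n. Y $$ (a, b) * A $$ (i * k + b, i * k + a))"
    by (rule sum.cong[OF refl], rule sum.swap)
  also have "\<dots> = trace (Y * partial_trace1 n k A)"
    using Y by (auto simp: trace_def scalar_prod_def atLeast0LessThan partial_trace1_index sum_distrib_left
        intro!: sum.cong)
  finally show ?thesis .
qed

lemma partial_trace1_herm_part:
  assumes H: "H \<in> carrier_mat (n * k) (n * k)"
  shows "partial_trace1 n k (herm_part H) = herm_part (partial_trace1 n k H)"
proof (rule eq_matI)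
  fix a b assume "a < dim_row (herm_part (partial_trace1 n k H))" "b < dim_col (herm_part (partial_trace1 n k H))"
  then have a: "a < k" and b: "b < k" by (auto simp: herm_part_def partial_trace1_def)
  then show "partial_trace1 n k (herm_part H) $$ (a, b) = herm_part (partial_trace1 n k H) $$ (a, b)"
    using H by (simp add: partial_trace1_index herm_part_def block_index_less sum.distrib
        sum_divide_distrib[symmetric])
qed (auto simp: herm_part_def partial_trace1_def)

section \<open>A Fischer-type inequality for the partial trace\<close>

text \<open>AM-GM via \<open>x \<le> c e\<^bsup>x/c - 1\<^esup>\<close>, i.e. \<open>1 + t \<le> e\<^sup>t\<close>, applied to each factor.\<close>
lemma prod_le_power_exp:
  fixes x :: "'a \<Rightarrow> real"
  assumes "finite A" "\<And>i. i \<in> A \<Longrightarrow> 0 \<le> x i" "0 < c"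
  shows "(\<Prod>i\<in>A. x i) \<le> c ^ card A * exp ((\<Sum>i\<in>A. x i) / c - card A)"
  using assms(1,2)
proof (induction A rule: finite_induct)
  case (insert a A)
  have "x a \<le> c * exp (x a / c - 1)"
    using exp_ge_add_one_self[of "x a / c - 1"] \<open>0 < c\<close> by (simp add: field_simps)
  then have "x a * (\<Prod>i\<in>A. x i) \<le> c * exp (x a / c - 1) * (c ^ card A * exp ((\<Sum>i\<in>A. x i) / c - card A))"
    using insert \<open>0 < c\<close> by (intro mult_mono) (auto intro: prod_nonneg mult_nonneg_nonneg)
  then show ?case
    using insert by (simp add: exp_add[symmetric] add_divide_distrib algebra_simps)
qed simp

lemma prod_le_mean_power:
  fixes x :: "'a \<Rightarrow> real"
  assumes A: "finite A" and x: "\<And>i. i \<in> A \<Longrightarrow> 0 \<le> x i"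
  shows "(\<Prod>i\<in>A. x i) \<le> ((\<Sum>i\<in>A. x i) / card A) ^ card A"
proof (cases "A = {}")
  case False
  then have card: "0 < card A" using A by (simp add: card_gt_0_iff)
  show ?thesis
  proof (cases "(\<Sum>i\<in>A. x i) = 0")
    case True
    then have "\<forall>i\<in>A. x i = 0" using sum_nonneg_eq_0_iff[OF A] x by blast
    then show ?thesis using False A card by (simp add: prod_zero)
  next
    case False
    moreover have "0 \<le> (\<Sum>i\<in>A. x i)" using x by (rule sum_nonneg)
    ultimately have "0 < (\<Sum>i\<in>A. x i)" by linarith
    then show ?thesis
      using prod_le_power_exp[where A = A and x = x and c = "(\<Sum>i\<in>A. x i) / card A"] A x card
      by simp
  qed
qed simp

text \<open>The \<open>r i\<close> are the generalized eigenvalues of \<open>R\<close> relative to \<open>I\<^sub>n \<otimes> tr\<^sub>1 R\<close>; their sum is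
  \<open>tr ((I\<^sub>n \<otimes> tr\<^sub>1 R)\<^sup>-\<^sup>1 R) = tr ((tr\<^sub>1 R)\<^sup>-\<^sup>1 tr\<^sub>1 R) = k\<close>.\<close>
lemma det_partial_trace1_factor:
  assumes n: "1 \<le> n" and R: "R \<in> carrier_mat (n * k) (n * k)" and pd: "pos_def (n * k) R"
  obtains r where "det R = det (partial_trace1 n k R) ^ n * of_real (\<Prod>i<n * k. r i)"
    "(\<Sum>i<n * k. r i) = real k" "\<And>i. i < n * k \<Longrightarrow> 0 < r i"
proof -
  define S where "S = partial_trace1 n k R"
  have S: "S \<in> carrier_mat k k" and pdS: "pos_def k S"
    unfolding S_def using pos_def_partial_trace1[OF n R pd] by simp_all
  obtain Si where Si: "Si \<in> carrier_mat k k" and SSi: "S * Si = 1\<^sub>m k"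
    using pos_def_invertible[OF S pdS] by blast
  have inv: "block_diag n k S * block_diag n k Si = 1\<^sub>m (n * k)"
    using block_diag_mult[OF S Si] block_diag_one SSi by simp
  obtain e where det: "det R = det (block_diag n k S) * (\<Prod>i<n * k. e i)"
    and trace: "trace (block_diag n k Si * R) = (\<Sum>i<n * k. e i)"
    and ev: "\<And>i. i < n * k \<Longrightarrow>
      \<exists>v. v \<in> carrier_vec (n * k) \<and> v \<noteq> 0\<^sub>v (n * k) \<and> R *\<^sub>v v = e i \<cdot>\<^sub>v (block_diag n k S *\<^sub>v v)"
    using det_trace_generalized_eigenvalues[OF R block_diag_carrier block_diag_carrier inv] by blast
  have e_pos: "0 < e i" if "i < n * k" for i
    using ev[OF that] generalized_eigenvalue_pos[OF R block_diag_carrier pd pos_def_block_diag[OF S pdS]]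
    by blast
  have "(\<Prod>i<n * k. e i) = (\<Prod>i<n * k. of_real (Re (e i)))"
    by (intro prod.cong refl complex_pos_of_real e_pos) simp
  then have "det R = det S ^ n * of_real (\<Prod>i<n * k. Re (e i))"
    unfolding det det_block_diag[OF S] by simp
  moreover have "(\<Sum>i<n * k. e i) = trace (S * Si)"
    unfolding trace[symmetric] S_def using Si R
    by (simp add: trace_block_diag_mult trace_mult_comm[of _ k k])
  then have "(\<Sum>i<n * k. Re (e i)) = real k"
    unfolding SSi by (metis Re_sum trace_one complex_Re_of_nat)
  moreover have "0 < Re (e i)" if "i < n * k" for i
    using e_pos[OF that] by (simp add: complex_pos_iff)
  ultimately show ?thesis
    using that unfolding S_def by blast
qed

lemma det_le_partial_trace1_power:
  assumes n: "1 \<le> n" and R: "R \<in> carrier_mat (n * k) (n * k)" and pd: "pos_def (n * k) R"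
  shows "Re (det R) \<le> (Re (det (partial_trace1 n k R)) / real n ^ k) ^ n"
proof -
  let ?S = "partial_trace1 n k R"
  obtain r where det: "det R = det ?S ^ n * of_real (\<Prod>i<n * k. r i)"
    and sum_r: "(\<Sum>i<n * k. r i) = real k" and r_pos: "\<And>i. i < n * k \<Longrightarrow> 0 < r i"
    using det_partial_trace1_factor[OF n R pd] by blast
  have "0 < det ?S"
    using pos_def_det[OF partial_trace1_carrier pos_def_partial_trace1[OF n R pd]] .
  then have det_S: "det ?S = of_real (Re (det ?S))" "0 < Re (det ?S)"
    using complex_pos_of_real by (auto simp: complex_pos_iff)
  have "(\<Prod>i<n * k. r i) \<le> (real k / real (n * k)) ^ (n * k)"
    using prod_le_mean_power[of "{..<n * k}" r] r_pos sum_r by (simp add: less_imp_le)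
  also have "\<dots> = (1 / real n) ^ (n * k)"
    by (cases "k = 0") simp_all
  finally have prod_r: "(\<Prod>i<n * k. r i) \<le> (1 / real n) ^ (n * k)" .
  have "Re (det R) = Re (det ?S) ^ n * (\<Prod>i<n * k. r i)"
    unfolding det by (subst det_S(1)) (simp del: of_real_prod flip: of_real_power of_real_mult)
  also have "\<dots> \<le> Re (det ?S) ^ n * (1 / real n) ^ (n * k)"
    using prod_r det_S(2) by (intro mult_left_mono) auto
  also have "\<dots> = (Re (det ?S) / real n ^ k) ^ n"
    by (simp add: power_divide power_mult[symmetric] mult.commute power_one_over)
  finally show ?thesis .
qed

theorem theorem3p5:
  fixes n k :: nat and \<alpha> :: real and H :: "complex mat"
  assumes "n \<ge> 1" and "k \<ge> 1"
    and "0 \<le> \<alpha>" and "\<alpha> < pi / 2"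
    and "H \<in> carrier_mat (n * k) (n * k)"
    and "numerical_range H \<subseteq> sector \<alpha>"
  shows "cmod (det (partial_trace1 n k H) / of_nat (n ^ k)) ^ n
           \<ge> (cos \<alpha>) ^ (n * k) * cmod (det H)"
proof -
  note n = assms(1) and \<alpha> = assms(3,4) and H = assms(5)
  let ?R = "herm_part H" and ?P = "partial_trace1 n k H"
  have sec: "\<And>v. v \<in> carrier_vec (n * k) \<Longrightarrow> v \<noteq> 0\<^sub>v (n * k) \<Longrightarrow> qform H v \<in> sector \<alpha>"
    using qform_in_sector[OF H assms(6)] by blast
  have R: "?R \<in> carrier_mat (n * k) (n * k)" and pd: "pos_def (n * k) ?R"
    using H pos_def_herm_part_sector[OF H sec] by simp_all
  have tr: "partial_trace1 n k ?R = herm_part ?P"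
    by (rule partial_trace1_herm_part[OF H])
  have "0 < cos \<alpha>" using \<alpha> by (intro cos_gt_zero_pi) auto
  then have "cos \<alpha> ^ (n * k) * cmod (det H) \<le> Re (det ?R)"
    using norm_det_le_sector[OF H \<alpha> sec] by (simp add: field_simps)
  also have "\<dots> \<le> (Re (det (herm_part ?P)) / real n ^ k) ^ n"
    using det_le_partial_trace1_power[OF n R pd] unfolding tr .
  also have "\<dots> \<le> (cmod (det ?P) / real n ^ k) ^ n"
  proof -
    have pdP: "pos_def k (herm_part ?P)"
      using pos_def_partial_trace1[OF n R pd] unfolding tr .
    then have "0 < Re (det (herm_part ?P))"
      using pos_def_det[OF herm_part_carrier[OF partial_trace1_carrier]] by (simp add: complex_pos_iff)
    then show ?thesis
      using Re_det_herm_part_le[OF partial_trace1_carrier pdP]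
      by (intro power_mono divide_right_mono) auto
  qed
  also have "\<dots> = cmod (det ?P / of_nat (n ^ k)) ^ n"
    by (simp add: norm_divide norm_power)
  finally show ?thesis .
qed

end
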